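(* Let $p$ be an odd prime and $\chi\ne1$ a Dirichlet character with odd conductor $f_\chi$ such that $p^2\nmid f_\chi$. Write $$\ell_{p,E}(s,\chi)=a_0-a_1(s-1)+a_2(s-1)^2-\cdots .$$ Then $|a_0|_p\le1$ and $p\mid a_n$ (i.e. $|a_n|_p\le|p|_p$) for all $n\geq1$.
   Context: Set $\chi(a)=0$ if $\gcd(a,f_\chi)>1$. Let $\omega$ be the Teichmüller character mod $p$ and $\langle a\rangle=\omega^{-1}(a)a$ for $a\in\mathbb Z_p^\times$. The $p$-adic Euler $\ell$-function is the $p$-adic analytic function $\ell_{p,E}(s,\chi)=\lim_{N\to\infty}\sum_{a=1,\,p\nmid a}^{f_\chi p^N}(-1)^a\chi(a)\langle a\rangle^{1-s}$, whose expansion about $s=1$ is as displayed, with coefficients $a_n\in\mathbb Q_p(\chi)$. *)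

theory Defs
  imports "HOL-Number_Theory.Number_Theory"
begin

definition padic_abs :: "nat \<Rightarrow> nat \<Rightarrow> real" where
  "padic_abs p n = (if n = 0 then 0 else inverse (real p ^ multiplicity p n))"

definition nv_lim :: "('a::field \<Rightarrow> real) \<Rightarrow> (nat \<Rightarrow> 'a) \<Rightarrow> 'a \<Rightarrow> bool" where
  "nv_lim nv X L \<longleftrightarrow> (\<forall>e>0. \<exists>N. \<forall>n\<ge>N. nv (X n - L) < e)"

definition nv_cauchy :: "('a::field \<Rightarrow> real) \<Rightarrow> (nat \<Rightarrow> 'a) \<Rightarrow> bool" where
  "nv_cauchy nv X \<longleftrightarrow> (\<forall>e>0. \<exists>N. \<forall>m\<ge>N. \<forall>n\<ge>N. nv (X m - X n) < e)"

definition nv_sums :: "('a::field \<Rightarrow> real) \<Rightarrow> (nat \<Rightarrow> 'a) \<Rightarrow> 'a \<Rightarrow> bool" where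
  "nv_sums nv f s \<longleftrightarrow> nv_lim nv (\<lambda>N. \<Sum>n<N. f n) s"

text \<open>nv is a complete non-archimedean absolute value on the field 'a whose restriction
  to the integers is the p-adic absolute value; i.e. ('a, nv) is a complete valued field
  extension of Q_p (e.g. Q_p(chi) or C_p).\<close>
definition padic_valued_field :: "nat \<Rightarrow> ('a::field \<Rightarrow> real) \<Rightarrow> bool" where
  "padic_valued_field p nv \<longleftrightarrow>
     (\<forall>x. 0 \<le> nv x) \<and> (\<forall>x. nv x = 0 \<longleftrightarrow> x = 0) \<and>
     (\<forall>x y. nv (x * y) = nv x * nv y) \<and>
     (\<forall>x y. nv (x + y) \<le> max (nv x) (nv y)) \<and>
     (\<forall>n. nv (of_nat n) = padic_abs p n) \<and>
     (\<forall>X. nv_cauchy nv X \<longrightarrow> (\<exists>L. nv_lim nv X L))"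

definition dirichlet_char :: "nat \<Rightarrow> (nat \<Rightarrow> 'a::field) \<Rightarrow> bool" where
  "dirichlet_char f \<chi> \<longleftrightarrow> f \<ge> 1 \<and> \<chi> 1 = 1 \<and>
     (\<forall>a b. \<chi> (a * b) = \<chi> a * \<chi> b) \<and> (\<forall>a. \<chi> (a + f) = \<chi> a) \<and>
     (\<forall>a. \<chi> a = 0 \<longleftrightarrow> \<not> coprime a f)"

text \<open>chi has conductor f: it is a primitive character mod f (not induced from a proper divisor).\<close>
definition has_conductor :: "(nat \<Rightarrow> 'a::field) \<Rightarrow> nat \<Rightarrow> bool" where
  "has_conductor \<chi> f \<longleftrightarrow> dirichlet_char f \<chi> \<and>
     (\<forall>d. d dvd f \<and> d < f \<longrightarrow>
        (\<exists>a b. coprime a f \<and> coprime b f \<and> [a = b] (mod d) \<and> \<chi> a \<noteq> \<chi> b))"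

definition teich :: "nat \<Rightarrow> ('a::field \<Rightarrow> real) \<Rightarrow> nat \<Rightarrow> 'a" where
  "teich p nv a = (THE w. w ^ (p - 1) = 1 \<and> nv (w - of_nat a) < 1)"

definition angle :: "nat \<Rightarrow> ('a::field \<Rightarrow> real) \<Rightarrow> nat \<Rightarrow> 'a" where
  "angle p nv a = of_nat a / teich p nv a"

definition log_p :: "('a::field \<Rightarrow> real) \<Rightarrow> 'a \<Rightarrow> 'a" where
  "log_p nv x = (THE L. nv_sums nv (\<lambda>k. (-1) ^ k * (x - 1) ^ (k + 1) / of_nat (k + 1)) L)"

definition exp_p :: "('a::field \<Rightarrow> real) \<Rightarrow> 'a \<Rightarrow> 'a" where
  "exp_p nv y = (THE E. nv_sums nv (\<lambda>k. y ^ k / of_nat (fact k)) E)"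

definition ppow :: "('a::field \<Rightarrow> real) \<Rightarrow> 'a \<Rightarrow> 'a \<Rightarrow> 'a" where
  "ppow nv x t = exp_p nv (t * log_p nv x)"

definition euler_partial :: "nat \<Rightarrow> ('a::field \<Rightarrow> real) \<Rightarrow> (nat \<Rightarrow> 'a) \<Rightarrow> nat \<Rightarrow> nat \<Rightarrow> 'a \<Rightarrow> 'a" where
  "euler_partial p nv \<chi> f N s =
     (\<Sum>a\<in>{a. 1 \<le> a \<and> a \<le> f * p ^ N \<and> \<not> p dvd a}.
        (-1) ^ a * \<chi> a * ppow nv (angle p nv a) (1 - s))"

end

theory Submission
  imports Defs
begin

text \<open>Each partial sum of the Euler l-function is a finite sum of terms
  (-1)^a chi(a) exp((1 - s) log_p <a>), and <a> = a / omega(a) is congruent to 1 mod p, so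
  |log_p <a>|_p <= 1/p.  Expanding the exponentials, a partial sum is a power series in 1 - s whose
  k-th coefficient is a sum of terms chi(a) (log_p <a>)^k / k!; since v_p(k!) <= k - 1 these have
  absolute value at most 1 for k = 0 and at most 1/p for k >= 1.  Evaluating at the points
  s = 1 - p^m, an identity theorem for p-adic power series shows that the coefficients of the
  partial sums converge to those of the limit, so the bounds pass to the coefficients a_n.\<close>

subsection \<open>Valuations of integers\<close>

lemma multiplicity_fact_div:
  assumes "prime (p::nat)"
  shows "multiplicity p (fact k) = k div p + multiplicity p (fact (k div p))"
proof (induction k)
  case 0 then show ?case by simp
next
  case (Suc k)
  have p: "p > 1" using assms prime_gt_1_nat by blast
  have "fact (Suc k) = Suc k * (fact k :: nat)" by simp
  then have mult_fact_Suc: "multiplicity p (fact (Suc k)) = multiplicity p (Suc k) + multiplicity p (fact k)"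
    using assms prime_elem_multiplicity_mult_distrib[of p "Suc k" "fact k"]
    by (simp del: fact_Suc)
  show ?case
  proof (cases "p dvd Suc k")
    case False
    then have "Suc k div p = k div p" by (simp add: div_Suc dvd_eq_mod_eq_0)
    with False mult_fact_Suc Suc show ?thesis by (simp add: not_dvd_imp_multiplicity_0)
  next
    case True
    then obtain b where b: "Suc k = p * b" by blast
    then have "b \<ge> 1" by (cases b) auto
    have "Suc k div p = b" using b p by simp
    moreover have "k div p = b - 1"
    proof (rule div_nat_eqI)
      show "p * (b - 1) \<le> k" using b \<open>b \<ge> 1\<close> p by (simp add: right_diff_distrib')
      show "k < p * Suc (b - 1)" using b \<open>b \<ge> 1\<close> by simp
    qed
    moreover have "multiplicity p (Suc k) = Suc (multiplicity p b)"
      using b \<open>b \<ge> 1\<close> p multiplicity_times_same[where p=p and x=b] by simp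
    moreover have "multiplicity p (fact b :: nat) = multiplicity p b + multiplicity p (fact (b - 1) :: nat)"
    proof -
      have "(fact b :: nat) = b * fact (b - 1)" using \<open>b \<ge> 1\<close> by (simp add: fact_reduce)
      then show ?thesis using assms \<open>b \<ge> 1\<close> by (simp add: prime_elem_multiplicity_mult_distrib)
    qed
    ultimately show ?thesis using mult_fact_Suc Suc \<open>b \<ge> 1\<close> by simp
  qed
qed

lemma multiplicity_fact_le:
  assumes "prime (p::nat)" "k \<ge> 1"
  shows "multiplicity p (fact k) \<le> k - 1"
  using assms(2)
proof (induction k rule: less_induct)
  case (less k)
  have p: "p \<ge> 2" using assms prime_ge_2_nat by blast
  show ?case
  proof (cases "k div p = 0")
    case True then show ?thesis using multiplicity_fact_div[OF assms(1), of k] by simp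
  next
    case False
    have "multiplicity p (fact (k div p)) \<le> k div p - 1"
      using less.IH[of "k div p"] less.prems p False by simp
    moreover have "2 * (k div p) \<le> k"
      using p by (metis div_mult_self1_is_m dual_order.trans mult_le_mono1 div_times_less_eq_dividend
          zero_less_numeral mult.commute)
    ultimately show ?thesis using multiplicity_fact_div[OF assms(1), of k] False by simp
  qed
qed

lemma padic_abs_le_1: "padic_abs p n \<le> 1"
  unfolding padic_abs_def by (cases "p = 0") (auto intro!: one_le_power simp: field_simps)

lemma padic_abs_pos: "prime p \<Longrightarrow> n \<noteq> 0 \<Longrightarrow> padic_abs p n > 0"
  by (simp add: padic_abs_def prime_gt_0_nat)

lemma padic_abs_eq_1: "\<not> p dvd n \<Longrightarrow> padic_abs p n = 1"
  by (cases "n = 0") (auto simp: padic_abs_def not_dvd_imp_multiplicity_0)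

lemma padic_abs_prime_power: "prime p \<Longrightarrow> padic_abs p (p ^ m) = (1 / real p) ^ m"
  by (simp add: padic_abs_def power_one_over prime_gt_0_nat prime_imp_prime_elem inverse_eq_divide)

lemma padic_abs_le_power:
  assumes "prime p" "p ^ j dvd n"
  shows "padic_abs p n \<le> (1 / real p) ^ j"
proof (cases "n = 0")
  case False
  have p: "p > 1" using assms prime_gt_1_nat by blast
  have "j \<le> multiplicity p n" using assms False by (intro multiplicity_geI) auto
  then have "real p ^ j \<le> real p ^ multiplicity p n" using p by (intro power_increasing) auto
  then show ?thesis using False p by (simp add: padic_abs_def power_one_over field_simps)
qed (simp add: padic_abs_def)

lemma inverse_padic_abs_le:
  assumes "prime p" "n \<ge> 1"
  shows "inverse (padic_abs p n) \<le> real n"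
proof -
  have "p ^ multiplicity p n \<le> n" using assms by (intro dvd_imp_le multiplicity_dvd) auto
  then have "real p ^ multiplicity p n \<le> real n" by (metis of_nat_le_iff of_nat_power)
  then show ?thesis using assms by (simp add: padic_abs_def)
qed

lemma padic_abs_fact_ge:
  assumes "prime p" "k \<ge> 1"
  shows "(1 / real p) ^ (k - 1) \<le> padic_abs p (fact k)"
proof -
  have "real p ^ multiplicity p (fact k) \<le> real p ^ (k - 1)"
    using prime_gt_1_nat[OF assms(1)] multiplicity_fact_le[OF assms] by (intro power_increasing) auto
  then show ?thesis using prime_gt_1_nat[OF assms(1)] by (simp add: padic_abs_def power_one_over field_simps)
qed

lemma fermat_theorem_int_dvd:
  assumes "prime p" "\<not> p dvd a"
  shows "int p dvd int a ^ (p - 1) - 1"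
proof -
  have "[a ^ (p - 1) = 1] (mod p)" by (rule fermat_theorem[OF assms])
  then have "[int a ^ (p - 1) = 1] (mod int p)" by (metis cong_int_iff of_nat_1 of_nat_power)
  then show ?thesis by (simp add: cong_iff_dvd_diff)
qed

lemma prime_power_dvd_pow_prime_diff:
  fixes x y :: int
  assumes "prime p" "int p ^ Suc j dvd x - y"
  shows "int p ^ Suc (Suc j) dvd x ^ p - y ^ p"
proof -
  have "int p dvd x - y" using assms(2) by (metis dvd_power dvd_trans zero_less_Suc)
  then have xy: "[x = y] (mod int p)" by (simp add: cong_iff_dvd_diff)
  have "[(\<Sum>i<p. y ^ (p - Suc i) * x ^ i) = (\<Sum>i<p. y ^ (p - Suc i) * y ^ i)] (mod int p)"
    by (intro cong_sum cong_mult cong_refl cong_pow xy)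
  also have "(\<Sum>i<p. y ^ (p - Suc i) * y ^ i) = int p * y ^ (p - 1)"
    by (simp flip: power_add)
  finally have "int p dvd (\<Sum>i<p. y ^ (p - Suc i) * x ^ i)" by (simp add: cong_0_iff cong_dvd_iff)
  then have "int p ^ Suc j * int p dvd (x - y) * (\<Sum>i<p. y ^ (p - Suc i) * x ^ i)"
    using assms(2) by (rule mult_dvd_mono[rotated])
  then show ?thesis by (simp add: power_diff_sumr2 mult.commute)
qed

lemma prime_power_dvd_pow_prime_power_diff:
  fixes x y :: int
  assumes "prime p" "int p dvd x - y"
  shows "int p ^ Suc j dvd x ^ (p ^ j) - y ^ (p ^ j)"
proof (induction j)
  case (Suc j)
  then have "int p ^ Suc (Suc j) dvd (x ^ (p ^ j)) ^ p - (y ^ (p ^ j)) ^ p"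
    by (rule prime_power_dvd_pow_prime_diff[OF assms(1)])
  then show ?case by (simp flip: power_mult add: mult.commute)
qed (use assms in simp)

subsection \<open>Complete non-archimedean valued fields\<close>

locale padic_field =
  fixes p :: nat and nv :: "'a::field \<Rightarrow> real"
  assumes prime_p: "prime p" and valued: "padic_valued_field p nv"
begin

lemma nv_nonneg: "0 \<le> nv x"
  and nv_eq_0_iff: "nv x = 0 \<longleftrightarrow> x = 0"
  and nv_mult: "nv (x * y) = nv x * nv y"
  and nv_add_le_max: "nv (x + y) \<le> max (nv x) (nv y)"
  and nv_of_nat: "nv (of_nat n) = padic_abs p n"
  and nv_complete: "nv_cauchy nv X \<Longrightarrow> \<exists>L. nv_lim nv X L"
  using valued unfolding padic_valued_field_def by blast+

lemma nv_0 [simp]: "nv 0 = 0"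
  by (simp add: nv_eq_0_iff)

lemma nv_1 [simp]: "nv 1 = 1"
  using nv_mult[of 1 1] nv_eq_0_iff[of 1] by simp

lemma nv_power: "nv (x ^ n) = nv x ^ n"
  by (induction n) (auto simp: nv_mult)

lemma nv_eq_1_if_root_of_unity: "w ^ n = 1 \<Longrightarrow> n > 0 \<Longrightarrow> nv w = 1"
  using nv_power[of w n] nv_nonneg[of w] power_eq_imp_eq_base[of "nv w" n 1] by simp

lemma nv_minus [simp]: "nv (- x) = nv x"
proof -
  have "nv (-1) = 1" by (rule nv_eq_1_if_root_of_unity[of _ 2]) auto
  then show ?thesis using nv_mult[of "-1" x] by simp
qed

lemma nv_minus_commute: "nv (x - y) = nv (y - x)"
  by (metis minus_diff_eq nv_minus)

lemma nv_inverse: "nv (inverse x) = inverse (nv x)"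
proof (cases "x = 0")
  case False
  then have "nv x * nv (inverse x) = 1" by (metis nv_mult nv_1 right_inverse)
  then show ?thesis by (metis inverse_unique)
qed simp

lemma nv_divide: "nv (x / y) = nv x / nv y"
  by (simp add: divide_inverse nv_mult nv_inverse)

lemma nv_add_le: "nv x \<le> B \<Longrightarrow> nv y \<le> B \<Longrightarrow> nv (x + y) \<le> B"
  using nv_add_le_max[of x y] by simp

lemma nv_diff_le: "nv x \<le> B \<Longrightarrow> nv y \<le> B \<Longrightarrow> nv (x - y) \<le> B"
  using nv_add_le[of x B "- y"] by simp

lemma nv_triangle: "nv (x + y) \<le> nv x + nv y"
  using nv_add_le_max[of x y] nv_nonneg[of x] nv_nonneg[of y] by simp

lemma nv_sum_le: "(\<And>i. i \<in> S \<Longrightarrow> nv (f i) \<le> B) \<Longrightarrow> 0 \<le> B \<Longrightarrow> nv (sum f S) \<le> B"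
  by (induction S rule: infinite_finite_induct) (auto intro!: nv_add_le)

lemma nv_of_nat_le_1: "nv (of_nat n) \<le> 1"
  by (simp add: nv_of_nat padic_abs_le_1)

lemma nv_of_nat_prime: "nv (of_nat p) = 1 / real p"
  using padic_abs_prime_power[OF prime_p, of 1] by (simp add: nv_of_nat)

lemma nv_of_int: "nv (of_int z) = padic_abs p (nat \<bar>z\<bar>)"
proof (cases "z \<ge> 0")
  case True then show ?thesis by (metis nat_0_le nv_of_nat of_int_of_nat_eq abs_of_nonneg)
next
  case False
  then have "of_int z = - (of_nat (nat \<bar>z\<bar>) :: 'a)" by simp
  then show ?thesis by (simp only: nv_minus nv_of_nat)
qed

lemma nv_of_nat_diff_le_power:
  assumes "int p ^ j dvd int x - int y"
  shows "nv (of_nat x - of_nat y) \<le> (1 / real p) ^ j"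
proof -
  have "p ^ j dvd nat \<bar>int x - int y\<bar>"
    using assms by (metis dvd_abs_iff int_dvd_int_iff nat_int of_nat_power zero_le_imp_eq_int abs_ge_zero)
  then have "padic_abs p (nat \<bar>int x - int y\<bar>) \<le> (1 / real p) ^ j"
    by (rule padic_abs_le_power[OF prime_p])
  moreover have "of_nat x - of_nat y = (of_int (int x - int y) :: 'a)" by simp
  ultimately show ?thesis by (simp only: nv_of_int)
qed

lemma nv_neg_one_power [simp]: "nv ((-1) ^ k) = 1"
  by (simp add: nv_power)

lemma inverse_prime_gt_0: "1 / real p > 0"
  and inverse_prime_lt_1: "1 / real p < 1"
  using prime_gt_1_nat[OF prime_p] by auto

lemma nv_eq_0_if_le_powers:
  assumes "\<And>n. nv z \<le> (1 / real p) ^ n"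
  shows "z = 0"
proof (rule ccontr)
  assume "z \<noteq> 0"
  then have "nv z > 0" using nv_nonneg[of z] nv_eq_0_iff[of z] by simp
  then obtain n where "(1 / real p) ^ n < nv z"
    using real_arch_pow_inv inverse_prime_lt_1 by blast
  then show False using assms[of n] by simp
qed

lemma nv_power_diff_le:
  assumes "nv x \<le> 1" "nv y \<le> 1"
  shows "nv (x ^ n - y ^ n) \<le> nv (x - y)"
proof -
  have "nv (\<Sum>i<n. y ^ (n - Suc i) * x ^ i) \<le> 1"
    using assms by (intro nv_sum_le)
      (auto simp: nv_mult nv_power nv_nonneg intro!: mult_le_one power_le_one)
  then have "nv (x - y) * nv (\<Sum>i<n. y ^ (n - Suc i) * x ^ i) \<le> nv (x - y)"
    using nv_nonneg by (simp add: mult_left_le)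
  then show ?thesis by (simp add: power_diff_sumr2 nv_mult)
qed

subsection \<open>Limits and series\<close>

lemma nv_lim_iff: "nv_lim nv X L \<longleftrightarrow> (\<lambda>N. nv (X N - L)) \<longlonglongrightarrow> 0"
  unfolding nv_lim_def LIMSEQ_iff using nv_nonneg by simp

lemma nv_tendsto_0_if_le:
  assumes "h \<longlonglongrightarrow> 0" "\<And>N. nv (X N) \<le> h N"
  shows "(\<lambda>N. nv (X N)) \<longlonglongrightarrow> 0"
  by (rule tendsto_sandwich[of "\<lambda>_. 0" _ _ h]) (use assms nv_nonneg in auto)

lemma nv_lim_bound:
  assumes "nv_lim nv X L" "eventually (\<lambda>N. nv (X N - a) \<le> B) sequentially"
  shows "nv (L - a) \<le> B"
proof -
  have lim: "(\<lambda>N. nv (X N - L) + B) \<longlonglongrightarrow> 0 + B"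
    using assms(1) by (intro tendsto_add tendsto_const) (simp add: nv_lim_iff)
  have "eventually (\<lambda>N. nv (L - a) \<le> nv (X N - L) + B) sequentially"
    using assms(2)
  proof eventually_elim
    case (elim N)
    have "nv (L - a) \<le> nv (X N - a) + nv (L - X N)"
      using nv_triangle[of "X N - a" "L - X N"] by simp
    then show ?case using elim nv_minus_commute[of L "X N"] by simp
  qed
  then show ?thesis using tendsto_le[OF _ lim tendsto_const] by simp
qed

lemma nv_lim_unique:
  assumes "nv_lim nv X L" "nv_lim nv X M"
  shows "L = M"
proof -
  have "nv (L - M) \<le> 0 + e" if "e > 0" for e
  proof (rule nv_lim_bound[OF assms(1)])
    show "eventually (\<lambda>N. nv (X N - M) \<le> 0 + e) sequentially"
      using assms(2) that unfolding nv_lim_def eventually_sequentially by (simp, meson less_imp_le)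
  qed
  then have "nv (L - M) \<le> 0" by (rule field_le_epsilon)
  then show ?thesis using nv_nonneg[of "L - M"] nv_eq_0_iff[of "L - M"] by simp
qed

lemma nv_lim_const: "nv_lim nv (\<lambda>N. c) c"
  by (simp add: nv_lim_iff)

lemma nv_lim_add:
  assumes "nv_lim nv X A" "nv_lim nv Y B"
  shows "nv_lim nv (\<lambda>N. X N + Y N) (A + B)"
proof -
  have "(\<lambda>N. nv (X N - A) + nv (Y N - B)) \<longlonglongrightarrow> 0 + 0"
    using assms unfolding nv_lim_iff by (intro tendsto_add)
  moreover have "nv (X N + Y N - (A + B)) \<le> nv (X N - A) + nv (Y N - B)" for N
    using nv_triangle[of "X N - A" "Y N - B"] by (simp add: algebra_simps)
  ultimately show ?thesis unfolding nv_lim_iff by (intro nv_tendsto_0_if_le) auto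
qed

lemma nv_lim_cmult:
  assumes "nv_lim nv X A"
  shows "nv_lim nv (\<lambda>N. c * X N) (c * A)"
proof -
  have "(\<lambda>N. nv c * nv (X N - A)) \<longlonglongrightarrow> nv c * 0"
    using assms by (intro tendsto_mult tendsto_const) (simp add: nv_lim_iff)
  then show ?thesis unfolding nv_lim_iff by (simp add: right_diff_distrib flip: nv_mult)
qed

lemma nv_lim_diff: "nv_lim nv X A \<Longrightarrow> nv_lim nv Y B \<Longrightarrow> nv_lim nv (\<lambda>N. X N - Y N) (A - B)"
  using nv_lim_add[of X A "\<lambda>N. - 1 * Y N" "- 1 * B"] nv_lim_cmult[of Y B "- 1"] by simp

lemma nv_lim_sum:
  "(\<And>i. i \<in> S \<Longrightarrow> nv_lim nv (X i) (A i)) \<Longrightarrow> nv_lim nv (\<lambda>N. \<Sum>i\<in>S. X i N) (\<Sum>i\<in>S. A i)"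
  by (induction S rule: infinite_finite_induct) (auto intro!: nv_lim_add nv_lim_const)

lemma nv_sums_unique: "nv_sums nv f A \<Longrightarrow> nv_sums nv f B \<Longrightarrow> A = B"
  unfolding nv_sums_def using nv_lim_unique by blast

lemma the_nv_sums_eq: "nv_sums nv f S \<Longrightarrow> (THE S. nv_sums nv f S) = S"
  by (blast intro: nv_sums_unique)

lemma nv_sums_diff: "nv_sums nv f A \<Longrightarrow> nv_sums nv g B \<Longrightarrow> nv_sums nv (\<lambda>k. f k - g k) (A - B)"
  unfolding nv_sums_def by (drule (1) nv_lim_diff) (simp add: sum_subtractf)

lemma nv_sums_cmult: "nv_sums nv f A \<Longrightarrow> nv_sums nv (\<lambda>k. c * f k) (c * A)"
  unfolding nv_sums_def by (drule nv_lim_cmult[where c = c]) (simp add: sum_distrib_left)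

lemma nv_sums_sum:
  assumes "\<And>i. i \<in> S \<Longrightarrow> nv_sums nv (f i) (A i)"
  shows "nv_sums nv (\<lambda>k. \<Sum>i\<in>S. f i k) (\<Sum>i\<in>S. A i)"
proof -
  have "nv_lim nv (\<lambda>N. \<Sum>i\<in>S. \<Sum>k<N. f i k) (\<Sum>i\<in>S. A i)"
    using assms unfolding nv_sums_def by (intro nv_lim_sum)
  then show ?thesis unfolding nv_sums_def by (subst (asm) sum.swap)
qed

lemma nv_sums_tail_le:
  assumes "nv_sums nv f S" "\<And>k. k \<ge> n \<Longrightarrow> nv (f k) \<le> B" "0 \<le> B"
  shows "nv (S - (\<Sum>k<n. f k)) \<le> B"
proof (rule nv_lim_bound)
  show "nv_lim nv (\<lambda>N. \<Sum>k<N. f k) S" using assms(1) by (simp add: nv_sums_def)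
  show "eventually (\<lambda>N. nv ((\<Sum>k<N. f k) - (\<Sum>k<n. f k)) \<le> B) sequentially"
    using eventually_ge_at_top[of n]
  proof eventually_elim
    case (elim N)
    then have "(\<Sum>k<N. f k) - (\<Sum>k<n. f k) = (\<Sum>k\<in>{n..<N}. f k)"
      by (simp add: lessThan_atLeast0 sum_diff_nat_ivl)
    then show ?case using assms(2,3) by (auto intro!: nv_sum_le)
  qed
qed

lemma nv_sums_exists:
  assumes "(\<lambda>k. nv (f k)) \<longlonglongrightarrow> 0"
  shows "\<exists>S. nv_sums nv f S"
proof -
  have "nv_cauchy nv (\<lambda>N. \<Sum>k<N. f k)"
    unfolding nv_cauchy_def
  proof (intro allI impI)
    fix e :: real assume "e > 0"
    obtain N where N: "\<And>k. k \<ge> N \<Longrightarrow> nv (f k) < e / 2"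
      using order_tendstoD(2)[OF assms, of "e / 2"] \<open>e > 0\<close> by (auto simp: eventually_sequentially)
    have key: "nv ((\<Sum>k<m. f k) - (\<Sum>k<n. f k)) < e" if "N \<le> n" "n \<le> m" for m n
    proof -
      have "(\<Sum>k<m. f k) - (\<Sum>k<n. f k) = (\<Sum>k\<in>{n..<m}. f k)"
        using that by (simp add: lessThan_atLeast0 sum_diff_nat_ivl)
      moreover have "nv (\<Sum>k\<in>{n..<m}. f k) \<le> e / 2"
        using that N \<open>e > 0\<close> by (intro nv_sum_le) (auto intro: less_imp_le)
      ultimately show ?thesis using \<open>e > 0\<close> by simp
    qed
    show "\<exists>N. \<forall>m\<ge>N. \<forall>n\<ge>N. nv ((\<Sum>k<m. f k) - (\<Sum>k<n. f k)) < e"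
    proof (intro exI allI impI)
      fix m n assume "m \<ge> N" "n \<ge> N"
      then show "nv ((\<Sum>k<m. f k) - (\<Sum>k<n. f k)) < e"
        using key[of n m] key[of m n] nv_minus_commute by (cases "n \<le> m") auto
    qed
  qed
  then show ?thesis using nv_complete by (auto simp: nv_sums_def)
qed

lemma nv_sums_terms_bounded:
  assumes "nv_sums nv f S"
  shows "\<exists>K. \<forall>k. nv (f k) \<le> K"
proof -
  have "nv_lim nv (\<lambda>N. \<Sum>k<Suc N. f k) S" "nv_lim nv (\<lambda>N. \<Sum>k<N. f k) S"
    using assms LIMSEQ_Suc[of "\<lambda>N. nv ((\<Sum>k<N. f k) - S)"] by (auto simp: nv_sums_def nv_lim_iff)
  then have "nv_lim nv f 0"
    using nv_lim_diff by fastforce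
  then have "convergent (\<lambda>k. nv (f k))"
    by (auto simp: nv_lim_iff convergent_def)
  then have "Bseq (\<lambda>k. nv (f k))" by (rule convergent_imp_Bseq)
  then show ?thesis unfolding Bseq_def by (metis abs_le_D1 real_norm_def)
qed

lemma nv_lim_if_steps_le:
  assumes "decseq \<delta>" "\<delta> \<longlonglongrightarrow> 0" "\<And>j. nv (X (Suc j) - X j) \<le> \<delta> j"
  shows "\<exists>W. \<forall>n. nv (W - X n) \<le> \<delta> n"
proof -
  have \<delta>_nonneg: "0 \<le> \<delta> n" for n using decseq_ge[OF assms(1,2)] .
  have dist: "nv (X m - X n) \<le> \<delta> n" if "n \<le> m" for m n
    using that
  proof (induction m rule: dec_induct)
    case (step k)
    have "\<delta> k \<le> \<delta> n" using assms(1) step.hyps(1) unfolding decseq_def by blast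
    then have "nv (X (Suc k) - X k) \<le> \<delta> n" using assms(3)[of k] by linarith
    then show ?case using nv_add_le[OF _ step.IH, of "X (Suc k) - X k"] by simp
  qed (simp add: \<delta>_nonneg)
  have "nv_cauchy nv X"
    unfolding nv_cauchy_def
  proof (intro allI impI)
    fix e :: real assume "e > 0"
    then obtain N where N: "\<delta> N < e"
      using order_tendstoD(2)[OF assms(2)] by (metis eventually_sequentially order.refl)
    have key: "nv (X m - X n) < e" if "N \<le> n" "n \<le> m" for m n
    proof -
      have "\<delta> n \<le> \<delta> N" using assms(1) that(1) unfolding decseq_def by blast
      then show ?thesis using dist[OF that(2)] N by linarith
    qed
    show "\<exists>N. \<forall>m\<ge>N. \<forall>n\<ge>N. nv (X m - X n) < e"
    proof (intro exI allI impI)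
      fix m n assume "m \<ge> N" "n \<ge> N"
      then show "nv (X m - X n) < e"
        using key[of n m] key[of m n] nv_minus_commute by (cases "n \<le> m") auto
    qed
  qed
  then obtain W where W: "nv_lim nv X W" using nv_complete by blast
  have "eventually (\<lambda>N. nv (X N - X n) \<le> \<delta> n) sequentially" for n
    unfolding eventually_sequentially using dist by blast
  then have "nv (W - X n) \<le> \<delta> n" for n by (rule nv_lim_bound[OF W])
  then show ?thesis by blast
qed

subsection \<open>Coefficients of convergent power series\<close>

lemma nv_lim_zero_if_eventually_le:
  assumes "d \<longlonglongrightarrow> 0" and "\<And>j. eventually (\<lambda>N. nv (X N) \<le> d j) sequentially"
  shows "nv_lim nv X 0"
  unfolding nv_lim_def
proof (intro allI impI)
  fix e :: real assume "e > 0"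
  then obtain j where "d j < e"
    using order_tendstoD(2)[OF assms(1)] by (metis eventually_sequentially order.refl)
  then show "\<exists>N. \<forall>n\<ge>N. nv (X n - 0) < e"
    using assms(2)[of j] unfolding eventually_sequentially by (simp, meson le_less_trans)
qed

text \<open>The coefficients are treated one at a time: the partial sum below index n tends to 0 by
  induction, while at the point p^m the tail beyond index n is of size K (R p^-m)^(n+1), which is
  negligible against p^(-m n) as m grows (here R = p^M).\<close>
lemma power_series_coeff_tendsto_0:
  fixes e F :: "nat \<Rightarrow> nat \<Rightarrow> 'a"
  assumes K: "K > 0"
    and growth: "\<And>N k. nv (e N k) \<le> K * (real p ^ M) ^ k"
    and sums: "\<And>N m. m > M \<Longrightarrow> nv_sums nv (\<lambda>k. e N k * of_nat (p ^ m) ^ k) (F N m)"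
    and lim: "\<And>m. m > M \<Longrightarrow> nv_lim nv (\<lambda>N. F N m) 0"
  shows "nv_lim nv (\<lambda>N. e N n) 0"
proof (induction n rule: less_induct)
  case (less n)
  define q where "q = 1 / real p"
  define R where "R = real p ^ M"
  have q: "0 < q" "q < 1" using inverse_prime_gt_0 inverse_prime_lt_1 by (auto simp: q_def)
  have qR: "R * q ^ M = 1" using prime_gt_0_nat[OF prime_p] by (simp add: q_def R_def power_one_over)
  define d where "d j = K * R ^ n * q ^ Suc j" for j
  have "d \<longlonglongrightarrow> K * R ^ n * 0"
    unfolding d_def using q by (intro tendsto_mult tendsto_const LIMSEQ_power_zero LIMSEQ_Suc) auto
  then have "d \<longlonglongrightarrow> 0" by simp
  then show ?case
  proof (rule nv_lim_zero_if_eventually_le)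
    fix j
    define m where "m = M + Suc j"
    define t :: 'a where "t = of_nat (p ^ m)"
    define r where "r = q ^ Suc j"
    have r: "0 < r" "r \<le> 1" unfolding r_def using q by (auto intro: power_le_one simp del: power_Suc)
    have "nv t = q ^ m" by (simp add: t_def nv_power nv_of_nat_prime q_def)
    then have "nv t * R = r" using qR by (simp add: m_def r_def power_add mult.commute)
    then have nv_t: "nv (t ^ k) * R ^ k = r ^ k" for k by (simp add: nv_power flip: power_mult_distrib)
    have term_le: "nv (e N k * t ^ k) \<le> K * r ^ k" for N k
    proof -
      have "nv (e N k) * nv (t ^ k) \<le> K * R ^ k * nv (t ^ k)"
        using growth[of N k] by (intro mult_right_mono) (simp_all add: R_def nv_nonneg)
      then show ?thesis by (simp add: nv_mult mult.assoc mult.commute[of "R ^ k"] nv_t)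
    qed
    have tail: "nv (F N m - (\<Sum>k<Suc n. e N k * t ^ k)) \<le> K * r ^ Suc n" for N
    proof (rule nv_sums_tail_le)
      show "nv_sums nv (\<lambda>k. e N k * t ^ k) (F N m)" using sums[of m N] by (simp add: m_def t_def)
      show "nv (e N k * t ^ k) \<le> K * r ^ Suc n" if "k \<ge> Suc n" for k
        using term_le[of N k] power_decreasing[OF that] r K
        by (meson less_imp_le mult_left_mono order.trans zero_le_power)
    qed (use K r in simp)
    have "nv_lim nv (\<lambda>N. F N m - (\<Sum>k<n. t ^ k * e N k)) (0 - (\<Sum>k<n. t ^ k * 0))"
      using lim[of m] less.IH by (intro nv_lim_diff nv_lim_sum nv_lim_cmult) (auto simp: m_def)
    then have "eventually (\<lambda>N. nv (F N m - (\<Sum>k<n. e N k * t ^ k)) < K * r ^ Suc n) sequentially"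
      using K r unfolding nv_lim_def eventually_sequentially by (simp add: mult.commute)
    then show "eventually (\<lambda>N. nv (e N n) \<le> d j) sequentially"
    proof eventually_elim
      case (elim N)
      have "e N n * t ^ n = (F N m - (\<Sum>k<n. e N k * t ^ k)) - (F N m - (\<Sum>k<Suc n. e N k * t ^ k))"
        by simp
      then have "nv (e N n) * nv (t ^ n) \<le> K * r ^ Suc n"
        using elim tail[of N] by (metis less_imp_le nv_diff_le nv_mult)
      then have "nv (e N n) * nv (t ^ n) * R ^ n \<le> K * r ^ Suc n * R ^ n"
        by (rule mult_right_mono) (simp add: R_def)
      also have "K * r ^ Suc n * R ^ n = d j * r ^ n"
        by (simp add: d_def r_def algebra_simps)
      finally show ?case using r by (simp add: mult.assoc nv_t)
    qed
  qed
qed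

lemma power_series_coeff_tendsto:
  fixes b :: "nat \<Rightarrow> nat \<Rightarrow> 'a" and c :: "nat \<Rightarrow> 'a"
  assumes b: "\<And>N k. nv (b N k) \<le> 1"
    and c: "\<And>m. m \<ge> M \<Longrightarrow> nv_sums nv (\<lambda>k. c k * of_nat (p ^ m) ^ k) (F m)"
    and P: "\<And>N m. m > M \<Longrightarrow> nv_sums nv (\<lambda>k. b N k * of_nat (p ^ m) ^ k) (P N m)"
    and lim: "\<And>m. m > M \<Longrightarrow> nv_lim nv (\<lambda>N. P N m) (F m)"
  shows "nv_lim nv (\<lambda>N. b N n) (c n)"
proof -
  define R where "R = real p ^ M"
  have R: "R \<ge> 1" using prime_gt_0_nat[OF prime_p] by (simp add: R_def)
  obtain K0 where K0: "\<And>k. nv (c k * of_nat (p ^ M) ^ k) \<le> K0"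
    using nv_sums_terms_bounded[OF c[OF order_refl]] by blast
  define K where "K = max K0 1"
  have "nv (c k) \<le> K * R ^ k" for k
  proof -
    have "nv (c k) * (1 / real p) ^ (M * k) \<le> K"
      using K0[of k] by (simp add: nv_mult nv_power nv_of_nat_prime K_def power_mult)
    then have "nv (c k) * (1 / real p) ^ (M * k) * R ^ k \<le> K * R ^ k"
      by (rule mult_right_mono) (use R in simp)
    moreover have "(1 / real p) ^ (M * k) * R ^ k = 1"
      using prime_gt_0_nat[OF prime_p] by (simp add: R_def power_one_over flip: power_mult)
    ultimately show ?thesis by (simp add: mult.assoc)
  qed
  moreover have "nv (b N k) \<le> K * R ^ k" for N k
    using b[of N k] R by (metis K_def max.cobounded2 mult_mono one_le_power order.trans mult_1
        zero_le_one)
  ultimately have growth: "nv (c k - b N k) \<le> K * R ^ k" for N k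
    by (rule nv_diff_le)
  have "nv_lim nv (\<lambda>N. c n - b N n) 0"
  proof (rule power_series_coeff_tendsto_0)
    show "K > 0" by (simp add: K_def)
    show "nv (c k - b N k) \<le> K * (real p ^ M) ^ k" for N k using growth by (simp add: R_def)
    show "nv_sums nv (\<lambda>k. (c k - b N k) * of_nat (p ^ m) ^ k) (F m - P N m)" if "m > M" for N m
      using nv_sums_diff[OF c P] that by (simp add: left_diff_distrib)
    show "nv_lim nv (\<lambda>N. F m - P N m) 0" if "m > M" for m
      using nv_lim_diff[OF nv_lim_const[of "F m"] lim[OF that]] by simp
  qed
  from nv_lim_diff[OF nv_lim_const[of "c n"] this] show ?thesis by simp
qed

subsection \<open>Teichmueller representatives\<close>

lemma teichmueller_exists:
  assumes "\<not> p dvd a"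
  shows "\<exists>w. w ^ (p - 1) = 1 \<and> nv (w - of_nat a) \<le> 1 / real p"
proof -
  define q where "q = 1 / real p"
  have q: "0 < q" "q < 1" using inverse_prime_gt_0 inverse_prime_lt_1 by (auto simp: q_def)
  define X where "X j = (of_nat (a ^ p ^ j) :: 'a)" for j
  have fermat: "int p dvd int a ^ (p - 1) - 1"
    by (rule fermat_theorem_int_dvd[OF prime_p assms])
  moreover have "int a ^ p - int a = int a * (int a ^ (p - 1) - 1)"
    using prime_gt_0_nat[OF prime_p] by (cases p) (simp_all add: algebra_simps)
  ultimately have "int p dvd int a ^ p - int a" by simp
  then have "int p ^ Suc j dvd (int a ^ p) ^ p ^ j - int a ^ p ^ j" for j
    by (rule prime_power_dvd_pow_prime_power_diff[OF prime_p])
  then have "nv (X (Suc j) - X j) \<le> q ^ Suc j" for j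
    unfolding X_def q_def by (intro nv_of_nat_diff_le_power) (simp add: power_mult[symmetric])
  moreover have "decseq (\<lambda>j. q ^ Suc j)" "(\<lambda>j. q ^ Suc j) \<longlonglongrightarrow> 0"
    using q by (auto simp: decseq_def intro!: power_decreasing LIMSEQ_power_zero LIMSEQ_Suc simp del: power_Suc)
  ultimately obtain w where w: "\<And>n. nv (w - X n) \<le> q ^ Suc n"
    using nv_lim_if_steps_le by blast
  have "nv w \<le> 1"
    using nv_add_le[of "w - X 0" 1 "X 0"] w[of 0] q nv_of_nat_le_1 by (simp add: X_def)
  have "nv (w ^ (p - 1) - 1) \<le> q ^ n" for n
  proof -
    have "nv (w ^ (p - 1) - X n ^ (p - 1)) \<le> q ^ Suc n"
      using nv_power_diff_le[OF \<open>nv w \<le> 1\<close> nv_of_nat_le_1] w[of n] by (metis X_def order.trans)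
    moreover have "int p ^ Suc n dvd (int a ^ (p - 1)) ^ p ^ n - 1 ^ p ^ n"
      using fermat by (rule prime_power_dvd_pow_prime_power_diff[OF prime_p])
    then have "nv (X n ^ (p - 1) - 1) \<le> q ^ Suc n"
      using nv_of_nat_diff_le_power[of "Suc n" "(a ^ p ^ n) ^ (p - 1)" 1]
      by (simp add: X_def q_def mult.commute flip: power_mult)
    ultimately have "nv ((w ^ (p - 1) - X n ^ (p - 1)) + (X n ^ (p - 1) - 1)) \<le> q ^ Suc n"
      by (rule nv_add_le)
    then have "nv (w ^ (p - 1) - 1) \<le> q ^ Suc n" by simp
    also have "\<dots> \<le> q ^ n" using q by (intro power_decreasing) auto
    finally show ?thesis .
  qed
  then have "w ^ (p - 1) - 1 = 0" by (intro nv_eq_0_if_le_powers) (simp add: q_def)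
  moreover have "nv (w - of_nat a) \<le> 1 / real p" using w[of 0] by (simp add: X_def q_def)
  ultimately show ?thesis by auto
qed

lemma nv_sum_powers_diff_le:
  assumes "nv x \<le> 1"
  shows "nv ((\<Sum>i<n. x ^ i) - of_nat n) \<le> nv (x - 1)"
proof -
  have "(\<Sum>i<n. x ^ i) - of_nat n = (\<Sum>i<n. x ^ i - 1 ^ i)" by (simp add: sum_subtractf)
  also have "nv \<dots> \<le> nv (x - 1)"
    using assms by (intro nv_sum_le nv_power_diff_le nv_nonneg) auto
  finally show ?thesis .
qed

text \<open>For the quotient u of two distinct (p-1)-th roots of unity, 1 + u + ... + u^(p-2) = 0, while
  this sum is congruent to the unit p - 1 modulo u - 1; hence |u - 1| = 1.\<close>
lemma teichmueller_unique:
  assumes w: "w ^ (p - 1) = 1" "nv (w - x) < 1" and v: "v ^ (p - 1) = 1" "nv (v - x) < 1"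
  shows "w = v"
proof (rule ccontr)
  assume "w \<noteq> v"
  have "p - 1 > 0" using prime_gt_1_nat[OF prime_p] by simp
  then have "nv w = 1" "nv v = 1" using w(1) v(1) nv_eq_1_if_root_of_unity by auto
  define u where "u = w / v"
  have "v \<noteq> 0" using \<open>nv v = 1\<close> by auto
  have "nv (w - v) < 1"
    using nv_add_le_max[of "w - x" "x - v"] w(2) v(2) nv_minus_commute[of x v] by simp
  moreover have "u - 1 = (w - v) / v" using \<open>v \<noteq> 0\<close> by (simp add: u_def field_simps)
  ultimately have u_near_1: "nv (u - 1) < 1" using \<open>nv v = 1\<close> by (simp add: nv_divide)
  have "u \<noteq> 1" using \<open>w \<noteq> v\<close> \<open>v \<noteq> 0\<close> by (simp add: u_def)
  moreover have "u ^ (p - 1) = 1" using w(1) v(1) by (simp add: u_def power_divide)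
  then have "(u - 1) * (\<Sum>i<p - 1. u ^ i) = 0" using power_diff_1_eq[of u "p - 1"] by simp
  ultimately have "(\<Sum>i<p - 1. u ^ i) = 0" by simp
  moreover have "nv u \<le> 1" using \<open>nv w = 1\<close> \<open>nv v = 1\<close> by (simp add: u_def nv_divide)
  ultimately have "nv (of_nat (p - 1)) < 1"
    using nv_sum_powers_diff_le[of u "p - 1"] u_near_1 by simp
  moreover have "\<not> p dvd p - 1"
    using \<open>p - 1 > 0\<close> dvd_imp_le[of p "p - 1"] by auto
  ultimately show False by (simp add: nv_of_nat padic_abs_eq_1)
qed

lemma teich:
  assumes "\<not> p dvd a"
  shows "teich p nv a ^ (p - 1) = 1" "nv (teich p nv a - of_nat a) \<le> 1 / real p"
proof -
  obtain w where w: "w ^ (p - 1) = 1" "nv (w - of_nat a) \<le> 1 / real p"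
    using teichmueller_exists[OF assms] by blast
  then have "nv (w - of_nat a) < 1" using inverse_prime_lt_1 by linarith
  then have "teich p nv a = w"
    unfolding teich_def using w(1) by (intro the_equality) (auto intro: teichmueller_unique)
  then show "teich p nv a ^ (p - 1) = 1" "nv (teich p nv a - of_nat a) \<le> 1 / real p"
    using w by simp_all
qed

lemma angle_near_1:
  assumes "\<not> p dvd a"
  shows "nv (angle p nv a - 1) \<le> 1 / real p"
proof -
  have "nv (teich p nv a) = 1"
    using teich(1)[OF assms] prime_gt_1_nat[OF prime_p] nv_eq_1_if_root_of_unity by simp
  then have "teich p nv a \<noteq> 0" by auto
  then have "angle p nv a - 1 = (of_nat a - teich p nv a) / teich p nv a"
    by (simp add: angle_def field_simps)
  then show ?thesis
    using teich(2)[OF assms] \<open>nv (teich p nv a) = 1\<close> nv_minus_commute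
    by (simp add: nv_divide)
qed

subsection \<open>The p-adic logarithm and exponential\<close>

lemma log_p_bound:
  assumes "nv (x - 1) \<le> 1 / real p"
  shows "nv (log_p nv x) \<le> 1 / real p"
proof -
  define q where "q = 1 / real p"
  have q: "0 < q" "q < 1" using inverse_prime_gt_0 inverse_prime_lt_1 by (auto simp: q_def)
  define g where "g k = (-1) ^ k * (x - 1) ^ (k + 1) / of_nat (k + 1)" for k
  have g_le: "nv (g k) \<le> real (k + 1) * q ^ (k + 1)" for k
  proof -
    have "nv (g k) = nv (x - 1) ^ (k + 1) * inverse (padic_abs p (k + 1))"
      unfolding g_def by (simp only: nv_mult nv_divide nv_power nv_neg_one_power nv_of_nat)
        (simp add: divide_inverse)
    also have "\<dots> \<le> q ^ (k + 1) * real (k + 1)"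
      using assms nv_nonneg inverse_padic_abs_le[OF prime_p, of "k + 1"]
        padic_abs_pos[OF prime_p, of "k + 1"]
      by (intro mult_mono power_mono) (auto simp: q_def)
    finally show ?thesis by (simp add: mult.commute)
  qed
  have "real (k + 1) \<le> real p ^ k" for k
  proof -
    have "k + 1 \<le> 2 ^ k" using less_exp[of k] by (simp add: Suc_le_eq)
    also have "(2::nat) ^ k \<le> p ^ k" using prime_ge_2_nat[OF prime_p] by (intro power_mono) auto
    finally show ?thesis by (metis of_nat_le_iff of_nat_power)
  qed
  then have "real (k + 1) * q ^ (k + 1) \<le> real p ^ k * q ^ (k + 1)" for k
    using q by (intro mult_right_mono) auto
  moreover have "real p ^ k * q ^ (k + 1) = q" for k
    using prime_gt_0_nat[OF prime_p] by (simp add: q_def power_one_over)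
  ultimately have g_le_q: "nv (g k) \<le> q" for k
    using g_le order.trans by metis
  have "(\<lambda>k. real (Suc k) * q ^ Suc k) \<longlonglongrightarrow> 0"
    using LIMSEQ_Suc[OF powser_times_n_limit_0[of q]] q by simp
  then have "(\<lambda>k. nv (g k)) \<longlonglongrightarrow> 0"
    by (rule nv_tendsto_0_if_le) (use g_le in simp)
  then obtain S where S: "nv_sums nv g S" using nv_sums_exists by blast
  then have "log_p nv x = S"
    unfolding log_p_def g_def[symmetric] by (rule the_nv_sums_eq)
  moreover have "nv (S - (\<Sum>k<0. g k)) \<le> q"
    using S g_le_q q by (intro nv_sums_tail_le) auto
  ultimately show ?thesis by (simp add: q_def)
qed

lemma nv_power_div_fact_le:
  assumes "nv L \<le> 1 / real p"
  shows "nv (L ^ k / of_nat (fact k)) \<le> (if k = 0 then 1 else 1 / real p)"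
proof (cases "k = 0")
  case False
  define q where "q = 1 / real p"
  have "q > 0" using inverse_prime_gt_0 by (simp add: q_def)
  have "nv (L ^ k / of_nat (fact k)) = nv L ^ k / padic_abs p (fact k)"
    by (simp add: nv_divide nv_power nv_of_nat)
  also have "\<dots> \<le> q ^ k / q ^ (k - 1)"
    using assms nv_nonneg \<open>q > 0\<close> padic_abs_fact_ge[OF prime_p, of k] False
    by (intro frac_le power_mono) (auto simp: q_def)
  also have "\<dots> = q" using False \<open>q > 0\<close> by (cases k) auto
  finally show ?thesis using False by (simp add: q_def)
qed simp

lemma exp_p_sums:
  assumes "nv L \<le> 1 / real p" and "nv t < 1"
  shows "nv_sums nv (\<lambda>k. L ^ k / of_nat (fact k) * t ^ k) (exp_p nv (t * L))"
proof -
  have "nv (L ^ k / of_nat (fact k) * t ^ k) \<le> nv t ^ k" for k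
  proof -
    have "nv (L ^ k / of_nat (fact k)) \<le> 1"
      using nv_power_div_fact_le[OF assms(1), of k] inverse_prime_lt_1 by (auto split: if_splits)
    then show ?thesis
      by (simp only: nv_mult nv_power) (intro mult_left_le_one_le zero_le_power nv_nonneg)
  qed
  moreover have "(\<lambda>k. nv t ^ k) \<longlonglongrightarrow> 0"
    using assms(2) nv_nonneg by (intro LIMSEQ_power_zero) auto
  ultimately obtain S where S: "nv_sums nv (\<lambda>k. L ^ k / of_nat (fact k) * t ^ k) S"
    using nv_sums_exists nv_tendsto_0_if_le by meson
  have "(\<lambda>k. (t * L) ^ k / of_nat (fact k)) = (\<lambda>k. L ^ k / of_nat (fact k) * t ^ k)"
    by (simp add: power_mult_distrib field_simps)
  then have "exp_p nv (t * L) = S" unfolding exp_p_def using S by (simp add: the_nv_sums_eq)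
  then show ?thesis using S by simp
qed

end

subsection \<open>Expansion of the Euler partial sums\<close>

lemma dirichlet_char_mod:
  assumes "dirichlet_char f \<chi>"
  shows "\<chi> (a mod f) = \<chi> a"
proof -
  have "\<chi> (b + f * k) = \<chi> b" for b k
  proof (induction k)
    case (Suc k)
    have "\<chi> (b + f * Suc k) = \<chi> ((b + f * k) + f)" by (simp add: algebra_simps)
    also have "\<dots> = \<chi> (b + f * k)" using assms by (simp add: dirichlet_char_def)
    finally show ?case using Suc by simp
  qed simp
  from this[of "a mod f" "a div f"] show ?thesis by simp
qed

lemma dirichlet_char_power: "dirichlet_char f \<chi> \<Longrightarrow> \<chi> (a ^ n) = \<chi> a ^ n"
  by (induction n) (auto simp: dirichlet_char_def)

definition euler_coeff :: "nat \<Rightarrow> ('a::field \<Rightarrow> real) \<Rightarrow> (nat \<Rightarrow> 'a) \<Rightarrow> nat \<Rightarrow> nat \<Rightarrow> nat \<Rightarrow> 'a" where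
  "euler_coeff p nv \<chi> f N k =
     (\<Sum>a\<in>{a. 1 \<le> a \<and> a \<le> f * p ^ N \<and> \<not> p dvd a}.
        (-1) ^ a * \<chi> a * (log_p nv (angle p nv a) ^ k / of_nat (fact k)))"

context padic_field
begin

lemma nv_dirichlet_char_le:
  assumes "dirichlet_char f \<chi>"
  shows "nv (\<chi> a) \<le> 1"
proof (cases "coprime a f")
  case True
  have "[a ^ totient f = 1] (mod f)" by (rule euler_theorem[OF True])
  then have "\<chi> (a ^ totient f) = \<chi> 1"
    using dirichlet_char_mod[OF assms] unfolding cong_def by metis
  moreover have "\<chi> 1 = 1" using assms by (simp add: dirichlet_char_def)
  ultimately have "\<chi> a ^ totient f = 1" by (simp add: dirichlet_char_power[OF assms])
  moreover have "totient f > 0" using assms by (simp add: dirichlet_char_def)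
  ultimately show ?thesis using nv_eq_1_if_root_of_unity by simp
next
  case False
  then have "\<chi> a = 0" using assms by (simp add: dirichlet_char_def)
  then show ?thesis by simp
qed

lemma euler_coeff_le:
  assumes "dirichlet_char f \<chi>"
  shows "nv (euler_coeff p nv \<chi> f N k) \<le> (if k = 0 then 1 else 1 / real p)"
  unfolding euler_coeff_def
proof (rule nv_sum_le)
  fix a assume a: "a \<in> {a. 1 \<le> a \<and> a \<le> f * p ^ N \<and> \<not> p dvd a}"
  define \<beta> where "\<beta> = log_p nv (angle p nv a) ^ k / of_nat (fact k)"
  have "nv \<beta> \<le> (if k = 0 then 1 else 1 / real p)"
    unfolding \<beta>_def using a by (intro nv_power_div_fact_le log_p_bound angle_near_1) simp
  moreover have "nv (\<chi> a) * nv \<beta> \<le> nv \<beta>"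
    using nv_dirichlet_char_le[OF assms] by (intro mult_left_le_one_le nv_nonneg)
  ultimately show "nv ((-1) ^ a * \<chi> a * \<beta>) \<le> (if k = 0 then 1 else 1 / real p)"
    by (simp only: nv_mult nv_neg_one_power mult_1)
qed (use inverse_prime_gt_0 in simp)

lemma euler_partial_sums:
  assumes "nv (1 - s) < 1"
  shows "nv_sums nv (\<lambda>k. euler_coeff p nv \<chi> f N k * (1 - s) ^ k) (euler_partial p nv \<chi> f N s)"
proof -
  let ?A = "{a. 1 \<le> a \<and> a \<le> f * p ^ N \<and> \<not> p dvd a}"
  let ?L = "\<lambda>a. log_p nv (angle p nv a)"
  have "nv_sums nv (\<lambda>k. (-1) ^ a * \<chi> a * (?L a ^ k / of_nat (fact k) * (1 - s) ^ k))
      ((-1) ^ a * \<chi> a * ppow nv (angle p nv a) (1 - s))" if "a \<in> ?A" for a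
    using that exp_p_sums[OF log_p_bound[OF angle_near_1] assms]
    by (intro nv_sums_cmult) (simp add: ppow_def)
  then have "nv_sums nv (\<lambda>k. \<Sum>a\<in>?A. (-1) ^ a * \<chi> a * (?L a ^ k / of_nat (fact k) * (1 - s) ^ k))
      (\<Sum>a\<in>?A. (-1) ^ a * \<chi> a * ppow nv (angle p nv a) (1 - s))"
    by (rule nv_sums_sum)
  then show ?thesis
    by (simp add: euler_coeff_def euler_partial_def sum_distrib_right mult.assoc)
qed

lemma euler_coeff_tendsto:
  assumes "dirichlet_char f \<chi>" and "r > 0"
    and "\<forall>s. nv (s - 1) < r \<longrightarrow>
           nv_lim nv (\<lambda>N. euler_partial p nv \<chi> f N s) (ell s) \<and>
           nv_sums nv (\<lambda>n. c n * (1 - s) ^ n) (ell s)"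
  shows "nv_lim nv (\<lambda>N. euler_coeff p nv \<chi> f N n) (c n)"
proof -
  obtain m0 where m0: "(1 / real p) ^ m0 < r"
    using real_arch_pow_inv[OF assms(2) inverse_prime_lt_1] by blast
  define t :: "nat \<Rightarrow> 'a" where "t m = of_nat (p ^ m)" for m
  have disc: "nv ((1 - t m) - 1) < r" if "m \<ge> m0" for m
  proof -
    have "(1 / real p) ^ m \<le> (1 / real p) ^ m0"
      by (rule power_decreasing[OF that]) (use inverse_prime_gt_0 inverse_prime_lt_1 in auto)
    then show ?thesis using m0 by (simp add: t_def nv_power nv_of_nat_prime)
  qed
  have ell: "nv_lim nv (\<lambda>N. euler_partial p nv \<chi> f N (1 - t m)) (ell (1 - t m))"
      "nv_sums nv (\<lambda>k. c k * t m ^ k) (ell (1 - t m))" if "m \<ge> m0" for m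
    using assms(3)[rule_format, OF disc[OF that]] by simp_all
  have small: "nv (1 - (1 - t m)) < 1" if "m > m0" for m
    using that inverse_prime_gt_0 inverse_prime_lt_1
    by (simp add: t_def nv_power nv_of_nat_prime power_less_one_iff)
  have partial: "nv_sums nv (\<lambda>k. euler_coeff p nv \<chi> f N k * t m ^ k)
      (euler_partial p nv \<chi> f N (1 - t m))" if "m > m0" for N m
    using euler_partial_sums[OF small[OF that]] by simp
  show ?thesis
  proof (rule power_series_coeff_tendsto[where M = m0 and F = "\<lambda>m. ell (1 - t m)"
        and P = "\<lambda>N m. euler_partial p nv \<chi> f N (1 - t m)"])
    show "nv (euler_coeff p nv \<chi> f N k) \<le> 1" for N k
      using euler_coeff_le[OF assms(1), of N k] inverse_prime_lt_1 by (simp split: if_splits)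
  qed (use ell partial in \<open>simp_all add: t_def\<close>)
qed

end

theorem corollary3p7:
  fixes p f :: nat and nv :: "'a::field \<Rightarrow> real" and \<chi> :: "nat \<Rightarrow> 'a"
    and ell :: "'a \<Rightarrow> 'a" and c :: "nat \<Rightarrow> 'a" and r :: real
  assumes "prime p" and "odd p"
    and "padic_valued_field p nv"
    and "has_conductor \<chi> f" and "\<chi> \<noteq> (\<lambda>_. 1)"
    and "odd f" and "\<not> p ^ 2 dvd f"
    and "r > 0"
    and "\<forall>s. nv (s - 1) < r \<longrightarrow>
           nv_lim nv (\<lambda>N. euler_partial p nv \<chi> f N s) (ell s) \<and>
           nv_sums nv (\<lambda>n. c n * (1 - s) ^ n) (ell s)"
  shows "nv (c 0) \<le> 1 \<and> (\<forall>n\<ge>1. nv (c n) \<le> padic_abs p p)"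
proof -
  interpret padic_field p nv using assms(1,3) by unfold_locales
  have \<chi>: "dirichlet_char f \<chi>" using assms(4) by (simp add: has_conductor_def)
  have "nv (c n - 0) \<le> (if n = 0 then 1 else 1 / real p)" for n
    using euler_coeff_tendsto[OF \<chi> assms(8,9)]
    by (rule nv_lim_bound) (simp add: euler_coeff_le[OF \<chi>])
  moreover have "padic_abs p p = 1 / real p" using padic_abs_prime_power[OF assms(1), of 1] by simp
  ultimately show ?thesis by (metis One_nat_def diff_0_right not_one_le_zero)
qed

end
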